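(* Let $\lambda>0$, $A>0$, $B>0$, and for integers $N\ge0$ and $z\in\mathbb{C}$ with $\Re(z)>B$ let $$R_{fact}(\lambda,A,B,N,z)=\frac{A}{(\lambda B)^{\lambda B}}\,\frac{(N+\lambda B+1)^{N+\lambda B+1}}{(N+1)^N}\left|\frac{\Gamma(\lambda z)\Gamma(N+1)}{\Gamma(\lambda z+N+1)(\Re(z)-B)}\right|.$$ Then for fixed $z$ with $\Re(z)>B$, as $N\to+\infty$, $$R_{fact}(\lambda,A,B,N,z)\sim\frac{A\,e^{\lambda B(1-\ln(\lambda B))}}{N^{\lambda(\Re(z)-B)-1}}\,\frac{|\Gamma(\lambda z)|}{\Re(z)-B}.$$ *)

theory Defs
  imports "HOL-Analysis.Analysis" "HOL-Library.Landau_Symbols"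
begin

definition R_fact :: "real \<Rightarrow> real \<Rightarrow> real \<Rightarrow> nat \<Rightarrow> complex \<Rightarrow> real" where
  "R_fact lam A B N z =
     A / ((lam * B) powr (lam * B))
     * ((real N + lam * B + 1) powr (real N + lam * B + 1) / (real N + 1) ^ N)
     * cmod (Gamma (complex_of_real lam * z) * Gamma (of_nat N + 1)
             / (Gamma (complex_of_real lam * z + of_nat N + 1) * complex_of_real (Re z - B)))"

end

theory Submission
  imports Defs "HOL-Real_Asymp.Real_Asymp"
begin

(* With c = lam B and w = lam z, Euler's limit formula gives
   Gamma w Gamma (N + 1) / Gamma (w + N + 1) = Gamma_series w N / N^w  with  Gamma_series w N --> Gamma w,
   so the modulus of the Gamma quotient is asymptotic to |Gamma w| N^(-Re w).  The prefactor satisfies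
   (N + c + 1)^(N + c + 1) / (N + 1)^N = (N + c + 1)^(c + 1) (1 + c / (N + 1))^N ~ e^c N^(c + 1),
   and Re w = (lam (Re z - B) - 1) + (c + 1) collects the powers of N. *)

lemma Gamma_series_eq_Gamma_ratio:
  fixes w :: complex
  assumes "w \<notin> \<int>\<^sub>\<le>\<^sub>0" "n > 0"
  shows "Gamma_series w n = Gamma w * of_nat n powr w * Gamma (of_nat n + 1) / Gamma (w + of_nat n + 1)"
proof -
  have "Gamma (of_nat n + 1 :: complex) = fact n"
    using Gamma_fact[of n] by (simp add: add.commute)
  moreover have "Gamma (w + of_nat n + 1) = pochhammer w (n + 1) * Gamma w"
    using pochhammer_Gamma[OF assms(1), of "n + 1"] Gamma_nonzero[OF assms(1)] by (simp add: field_simps)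
  moreover have "of_nat n powr w = exp (w * of_real (ln (real n)))"
    using assms(2) by (simp add: powr_def)
  ultimately show ?thesis
    using Gamma_nonzero[OF assms(1)] pochhammer_eq_0_iff
    by (simp add: Gamma_series_def)
qed

lemma Gamma_ratio_asymp_equiv:
  fixes w :: complex
  assumes "w \<notin> \<int>\<^sub>\<le>\<^sub>0"
  shows "(\<lambda>n. Gamma (of_nat n + 1) / Gamma (w + of_nat n + 1)) \<sim>[at_top] (\<lambda>n. 1 / of_nat n powr w)"
proof (rule asymp_equivI')
  have Gamma_w: "Gamma w \<noteq> 0"
    using assms by (rule Gamma_nonzero)
  have "(\<lambda>n. Gamma_series w n / Gamma w) \<longlonglongrightarrow> Gamma w / Gamma w"
    using Gamma_w by (intro tendsto_intros)
  then have "(\<lambda>n. Gamma_series w n / Gamma w) \<longlonglongrightarrow> 1"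
    using Gamma_w by simp
  moreover have "\<forall>\<^sub>F n in at_top. Gamma_series w n / Gamma w
      = Gamma (of_nat n + 1) / Gamma (w + of_nat n + 1) / (1 / of_nat n powr w)"
    using eventually_gt_at_top[of 0]
    by eventually_elim (use assms Gamma_w in \<open>simp add: Gamma_series_eq_Gamma_ratio\<close>)
  ultimately show "((\<lambda>n. Gamma (of_nat n + 1) / Gamma (w + of_nat n + 1) / (1 / of_nat n powr w)) \<longlongrightarrow> 1) at_top"
    by (rule Lim_transform_eventually)
qed

lemma shifted_self_powr_asymp_equiv:
  fixes c :: real
  shows "(\<lambda>x. (x + c + 1) powr (x + c + 1) / (x + 1) powr x) \<sim>[at_top] (\<lambda>x. exp c * x powr (c + 1))"
proof -
  have "(\<lambda>x. ((x + c + 1) / (x + 1)) powr x) \<sim>[at_top] (\<lambda>_. exp c)"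
    by (rule tendsto_imp_asymp_equiv_const) (real_asymp, simp)
  moreover have "(\<lambda>x. (x + c + 1) powr (c + 1)) \<sim>[at_top] (\<lambda>x. x powr (c + 1))"
    by real_asymp
  ultimately have "(\<lambda>x. ((x + c + 1) / (x + 1)) powr x * (x + c + 1) powr (c + 1))
      \<sim>[at_top] (\<lambda>x. exp c * x powr (c + 1))"
    by (rule asymp_equiv_mult)
  moreover have "\<forall>\<^sub>F x in at_top. ((x + c + 1) / (x + 1)) powr x * (x + c + 1) powr (c + 1)
      = (x + c + 1) powr (x + c + 1) / (x + 1) powr x"
    using eventually_gt_at_top[of "\<bar>c\<bar> + 1"]
    by eventually_elim (simp add: powr_divide powr_add)
  ultimately show ?thesis
    by (rule asymp_equiv_transfer) simp
qed

lemma shifted_self_power_asymp_equiv: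
  fixes c :: real
  shows "(\<lambda>n. (real n + c + 1) powr (real n + c + 1) / (real n + 1) ^ n)
    \<sim>[at_top] (\<lambda>n. exp c * real n powr (c + 1))"
  using asymp_equiv_compose'[OF shifted_self_powr_asymp_equiv filterlim_real_sequentially]
  by (simp add: powr_realpow)

theorem lemma3p3:
  fixes lam A B :: real and z :: complex
  assumes "lam > 0" and "A > 0" and "B > 0" and "Re z > B"
  shows "(%N. R_fact lam A B N z) \<sim>[at_top]
    (%N. A * exp (lam * B * (1 - ln (lam * B))) / (real N powr (lam * (Re z - B) - 1))
          * (cmod (Gamma (complex_of_real lam * z)) / (Re z - B)))"
proof -
  define c where "c = lam * B"
  define w where "w = complex_of_real lam * z"
  define s where "s = Re z - B"
  have "s > 0"
    using assms by (simp add: s_def)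
  have Re_w: "Re w = (lam * s - 1) + (c + 1)"
    by (simp add: w_def s_def c_def algebra_simps)
  have "Re w > 0"
    using assms by (simp add: w_def)
  then have "w \<notin> \<int>\<^sub>\<le>\<^sub>0"
    by (auto elim!: nonpos_Ints_cases)
  have R_fact_eq: "R_fact lam A B N z = A / c powr c
      * ((real N + c + 1) powr (real N + c + 1) / (real N + 1) ^ N)
      * (cmod (Gamma w) * cmod (Gamma (of_nat N + 1) / Gamma (w + of_nat N + 1)) / s)" for N
    using \<open>s > 0\<close> by (simp add: R_fact_def c_def w_def s_def norm_mult norm_divide del: of_real_diff)
  have "(\<lambda>N. R_fact lam A B N z) \<sim>[at_top] (\<lambda>N. A / c powr c * (exp c * real N powr (c + 1))
      * (cmod (Gamma w) * cmod (1 / of_nat N powr w) / s))"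
    unfolding R_fact_eq
    by (intro asymp_equiv_intros shifted_self_power_asymp_equiv Gamma_ratio_asymp_equiv) fact
  also have "\<dots> \<sim>[at_top] (\<lambda>N. A * (exp c / c powr c) / real N powr (lam * s - 1) * (cmod (Gamma w) / s))"
    by (intro asymp_equiv_refl_ev eventually_mono[OF eventually_gt_at_top[of 0]])
       (simp add: norm_divide norm_powr_real_powr Re_w powr_add powr_diff)
  also have "exp c / c powr c = exp (lam * B * (1 - ln (lam * B)))"
    using assms by (simp add: c_def powr_def exp_diff algebra_simps)
  finally show ?thesis
    by (simp add: w_def s_def)
qed

end
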